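(* Let $k\ge1$ and let $\Gamma\subset\mathbb{R}_+^k$ be a nonempty compact set of possible allocations. For every random valuation $X$ with values in $\mathbb{R}_+^k$ and finite expectation ($\mathbb{E}\|X\|<\infty$) there exists a monotonic (incentive compatible and individually rational) $\Gamma$-mechanism $\mu$ with $R(\mu;X)=\textsc{MonRev}_\Gamma(X)$.
   Context: A $\Gamma$-mechanism $\mu=(q,s)$ consists of $q:\mathbb{R}_+^k\to\Gamma$ and $s:\mathbb{R}_+^k\to\mathbb{R}$; it is IC if $q(x)\cdot x-s(x)\ge q(y)\cdot x-s(y)$ for all $x,y\in\mathbb{R}_+^k$, and IR if $q(x)\cdot x-s(x)\ge0$ for all $x\in\mathbb{R}_+^k$. It is monotonic if $s(y)\ge s(x)$ whenever $y\ge x$ (coordinatewise) in $\mathbb{R}_+^k$. The revenue is $R(\mu;X):=\mathbb{E}[s(X)]$, and $\textsc{MonRev}_\Gamma(X)$ is the supremum of $R(\mu;X)$ over all monotonic IC and IR $\Gamma$-mechanisms $\mu$. *)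

theory Defs
  imports "HOL-Probability.Probability"
begin

text \<open>The nonnegative orthant R_+^k, with k the cardinality of the finite index type 'k.\<close>
definition nonneg_orthant :: "(real^'k) set" where
  "nonneg_orthant = {x. \<forall>i. 0 \<le> x $ i}"

text \<open>A Gamma-mechanism (q,s): q maps R_+^k into Gamma (values outside R_+^k are irrelevant).\<close>
definition is_mechanism :: "(real^'k) set \<Rightarrow> (real^'k \<Rightarrow> real^'k) \<Rightarrow> (real^'k \<Rightarrow> real) \<Rightarrow> bool" where
  "is_mechanism \<Gamma> q s \<longleftrightarrow> (\<forall>x\<in>nonneg_orthant. q x \<in> \<Gamma>)"

definition mech_IC :: "(real^'k \<Rightarrow> real^'k) \<Rightarrow> (real^'k \<Rightarrow> real) \<Rightarrow> bool" where
  "mech_IC q s \<longleftrightarrow> (\<forall>x\<in>nonneg_orthant. \<forall>y\<in>nonneg_orthant.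
      q x \<bullet> x - s x \<ge> q y \<bullet> x - s y)"

definition mech_IR :: "(real^'k \<Rightarrow> real^'k) \<Rightarrow> (real^'k \<Rightarrow> real) \<Rightarrow> bool" where
  "mech_IR q s \<longleftrightarrow> (\<forall>x\<in>nonneg_orthant. q x \<bullet> x - s x \<ge> 0)"

definition mech_monotonic :: "(real^'k \<Rightarrow> real) \<Rightarrow> bool" where
  "mech_monotonic s \<longleftrightarrow> (\<forall>x\<in>nonneg_orthant. \<forall>y\<in>nonneg_orthant.
      (\<forall>i. x $ i \<le> y $ i) \<longrightarrow> s x \<le> s y)"

definition revenue :: "'a measure \<Rightarrow> ('a \<Rightarrow> real^'k) \<Rightarrow> (real^'k \<Rightarrow> real) \<Rightarrow> real" where
  "revenue M X s = integral\<^sup>L M (\<lambda>\<omega>. s (X \<omega>))"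

definition admissible_mon :: "(real^'k) set \<Rightarrow> 'a measure \<Rightarrow> ('a \<Rightarrow> real^'k)
    \<Rightarrow> (real^'k \<Rightarrow> real^'k) \<Rightarrow> (real^'k \<Rightarrow> real) \<Rightarrow> bool" where
  "admissible_mon \<Gamma> M X q s \<longleftrightarrow> is_mechanism \<Gamma> q s \<and> mech_IC q s \<and> mech_IR q s
      \<and> mech_monotonic s \<and> integrable M (\<lambda>\<omega>. s (X \<omega>))"

definition MonRev :: "(real^'k) set \<Rightarrow> 'a measure \<Rightarrow> ('a \<Rightarrow> real^'k) \<Rightarrow> real" where
  "MonRev \<Gamma> M X = Sup {revenue M X s | q s. admissible_mon \<Gamma> M X q s}"

end

theory Submission
  imports Defs "HOL-Library.Diagonal_Subsequence"
begin

(* Take monotonic IC and IR mechanisms (q_n, s_n) whose revenues tend to MonRev; replacing s_n by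
   s_n - s_n(0) only raises revenue, so s_n(0) = 0 and hence 0 <= s_n(x) <= G |x|, where G bounds
   Gamma. By IC the utilities u_n(x) = q_n(x).x - s_n(x) are G-Lipschitz, so a diagonal argument over
   a countable dense set yields a subsequence with u_n -> U pointwise. Put s = limsup s_n, which is
   monotonic. At each x pass to a further subsequence with s_n(x) -> s(x) and q_n(x) -> q(x) in the
   compact Gamma: the limit of IC is q(x).y - s(x) <= U(y), with equality at y = x, and this gives IC
   and IR of (q, s). Finally the reverse Fatou lemma, dominated by G |X|, gives
   E[s(X)] >= lim E[s_n(X)] = MonRev. *)

lemma diagonal_convergent_subseq:
  fixes f :: "nat \<Rightarrow> nat \<Rightarrow> real"
  assumes bounded: "\<And>n m. \<bar>f n m\<bar> \<le> B m"
  obtains d where "strict_mono d" "\<And>m. convergent (\<lambda>k. f (d k) m)"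
proof -
  interpret subseqs "\<lambda>m d. convergent (\<lambda>k. f (d k) m)"
  proof
    fix m and d :: "nat \<Rightarrow> nat"
    have "f (d k) m \<in> {-B m..B m}" for k
      using bounded by (simp add: abs_le_iff minus_le_iff)
    then obtain l r where "strict_mono r" "((\<lambda>k. f (d k) m) \<circ> r) \<longlonglongrightarrow> l"
      using compact_Icc compact_imp_seq_compact seq_compactE by metis
    then show "\<exists>r. strict_mono r \<and> convergent (\<lambda>k. f ((d \<circ> r) k) m)"
      by (auto simp: convergent_def o_def)
  qed
  have "convergent (\<lambda>k. f ((diagseq \<circ> (+) (Suc m)) k) m)" for m
    by (rule diagseq_holds) (auto dest: convergent_subseq_convergent simp: o_def)
  then have "convergent (\<lambda>k. f (diagseq (k + Suc m)) m)" for m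
    by (simp add: o_def add.commute[of k m for k])
  then have "convergent (\<lambda>k. f (diagseq k) m)" for m
    using convergent_ignore_initial_segment[of "\<lambda>k. f (diagseq k) m" "Suc m"] by simp
  with subseq_diagseq show thesis
    by (rule that)
qed

lemma equilipschitz_convergent_from_dense:
  fixes u :: "nat \<Rightarrow> 'a::metric_space \<Rightarrow> real"
  assumes lipschitz: "\<And>n x y. x \<in> S \<Longrightarrow> y \<in> S \<Longrightarrow> \<bar>u n x - u n y\<bar> \<le> L * dist x y"
    and "D \<subseteq> S" "S \<subseteq> closure D" and convergent_on_D: "\<And>y. y \<in> D \<Longrightarrow> convergent (\<lambda>n. u n y)"
    and "x \<in> S"
  shows "convergent (\<lambda>n. u n x)"
  unfolding Cauchy_convergent_iff[symmetric]
proof (rule CauchyI)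
  fix e :: real
  assume "0 < e"
  define L' where "L' = \<bar>L\<bar> + 1"
  have "0 < L'"
    by (simp add: L'_def)
  then have "0 < e / (3 * L')"
    using \<open>0 < e\<close> by simp
  then obtain y where "y \<in> D" and y_close: "dist y x < e / (3 * L')"
    using \<open>x \<in> S\<close> \<open>S \<subseteq> closure D\<close> closure_approachable by blast
  have "L * dist x y \<le> L' * dist x y"
    by (intro mult_right_mono) (auto simp: L'_def)
  also have "\<dots> \<le> L' * (e / (3 * L'))"
    using y_close \<open>0 < L'\<close> by (intro mult_left_mono) (auto simp: dist_commute)
  also have "\<dots> = e / 3"
    using \<open>0 < L'\<close> by simp
  finally have close: "\<bar>u n x - u n y\<bar> \<le> e / 3" for n
    using lipschitz[of x y n] \<open>x \<in> S\<close> \<open>y \<in> D\<close> \<open>D \<subseteq> S\<close> by auto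
  obtain N where N: "\<forall>m\<ge>N. \<forall>n\<ge>N. norm (u m y - u n y) < e / 3"
    using convergent_on_D[OF \<open>y \<in> D\<close>] \<open>0 < e\<close>
    by (auto simp: Cauchy_convergent_iff[symmetric] dest!: CauchyD[where e="e / 3"])
  have "norm (u m x - u n x) < e" if "m \<ge> N" "n \<ge> N" for m n
  proof -
    have "\<bar>u m y - u n y\<bar> < e / 3"
      using N that by auto
    then show ?thesis
      using close[of m] close[of n] unfolding real_norm_def abs_le_iff abs_less_iff by linarith
  qed
  then show "\<exists>N. \<forall>m\<ge>N. \<forall>n\<ge>N. norm (u m x - u n x) < e"
    by blast
qed

lemma equilipschitz_pointwise_convergent_subseq:
  fixes u :: "nat \<Rightarrow> 'a::{metric_space, second_countable_topology} \<Rightarrow> real"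
  assumes lipschitz: "\<And>n x y. x \<in> S \<Longrightarrow> y \<in> S \<Longrightarrow> \<bar>u n x - u n y\<bar> \<le> L * dist x y"
    and bounded: "\<And>n x. x \<in> S \<Longrightarrow> \<bar>u n x\<bar> \<le> B x"
  obtains d where "strict_mono d" "\<And>x. x \<in> S \<Longrightarrow> convergent (\<lambda>k. u (d k) x)"
proof -
  obtain D where D: "countable D" "D \<subseteq> S" "S \<subseteq> closure D"
    using separable .
  show thesis
  proof (cases "D = {}")
    case True
    with D have "S = {}"
      by simp
    then show thesis
      using strict_mono_id that by blast
  next
    case False
    define e where "e = from_nat_into D"
    have "e m \<in> S" for m
      using from_nat_into[OF False] D(2) by (auto simp: e_def)
    then obtain d where "strict_mono d" and convergent_e: "\<And>m. convergent (\<lambda>k. u (d k) (e m))"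
      using diagonal_convergent_subseq[of "\<lambda>n m. u n (e m)" "\<lambda>m. B (e m)"] bounded by blast
    have "convergent (\<lambda>k. u (d k) y)" if "y \<in> D" for y
      using convergent_e[of "to_nat_on D y"] D(1) that by (simp add: e_def)
    then have "convergent (\<lambda>k. u (d k) x)" if "x \<in> S" for x
      using equilipschitz_convergent_from_dense[of S "\<lambda>k. u (d k)" L D x] lipschitz D(2,3) that
      by blast
    with \<open>strict_mono d\<close> show thesis
      by (rule that)
  qed
qed

text \<open>\<open>ennreal\<close> cuts negative values to \<open>0\<close> and \<open>enn2real\<close> sends \<open>\<infinity>\<close> to \<open>0\<close>: this is the
  limit superior only for nonnegative sequences that stay bounded.\<close>
definition pointwise_limsup :: "(nat \<Rightarrow> 'a \<Rightarrow> real) \<Rightarrow> 'a \<Rightarrow> real" where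
  "pointwise_limsup f x = enn2real (limsup (\<lambda>n. ennreal (f n x)))"

lemma pointwise_limsup_nonneg: "0 \<le> pointwise_limsup f x"
  by (simp add: pointwise_limsup_def)

lemma ennreal_pointwise_limsup:
  assumes "\<And>n. f n x \<le> b"
  shows "ennreal (pointwise_limsup f x) = limsup (\<lambda>n. ennreal (f n x))"
proof -
  have "limsup (\<lambda>n. ennreal (f n x)) \<le> ennreal b"
    using assms by (intro Limsup_bounded always_eventually allI ennreal_leI)
  then show ?thesis
    by (simp add: pointwise_limsup_def order.strict_trans1)
qed

lemma pointwise_limsup_le:
  assumes "\<And>n. f n x \<le> b" "0 \<le> b"
  shows "pointwise_limsup f x \<le> b"
proof -
  have "limsup (\<lambda>n. ennreal (f n x)) \<le> ennreal b"
    using assms by (intro Limsup_bounded always_eventually allI ennreal_leI)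
  then have "ennreal (pointwise_limsup f x) \<le> ennreal b"
    using ennreal_pointwise_limsup[of f x b] assms(1) by simp
  then show ?thesis
    using \<open>0 \<le> b\<close> by simp
qed

lemma pointwise_limsup_mono:
  assumes "\<And>n. f n x \<le> f n y" "\<And>n. f n y \<le> b"
  shows "pointwise_limsup f x \<le> pointwise_limsup f y"
proof -
  have "limsup (\<lambda>n. ennreal (f n x)) \<le> limsup (\<lambda>n. ennreal (f n y))"
    using assms(1) by (intro Limsup_mono always_eventually allI ennreal_leI)
  then have "ennreal (pointwise_limsup f x) \<le> ennreal (pointwise_limsup f y)"
    using ennreal_pointwise_limsup[of f y b] ennreal_pointwise_limsup[of f x b]
      assms order_trans[OF assms(1,2)] by simp
  then show ?thesis
    using pointwise_limsup_nonneg[of f y] by simp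
qed

lemma pointwise_limsup_subseq_tendsto:
  assumes "\<And>n. 0 \<le> f n x" "\<And>n. f n x \<le> b"
  obtains r where "strict_mono r" "(\<lambda>k. f (r k) x) \<longlonglongrightarrow> pointwise_limsup f x"
proof -
  obtain r where "strict_mono r" "((\<lambda>n. ennreal (f n x)) \<circ> r) \<longlonglongrightarrow> limsup (\<lambda>n. ennreal (f n x))"
    using limsup_subseq_lim by blast
  moreover have "(\<lambda>k. ennreal (f (r k) x)) \<longlonglongrightarrow> ennreal (pointwise_limsup f x)
      \<longleftrightarrow> (\<lambda>k. f (r k) x) \<longlonglongrightarrow> pointwise_limsup f x"
    using assms(1) pointwise_limsup_nonneg by (intro tendsto_ennreal_iff) auto
  ultimately show thesis
    using that ennreal_pointwise_limsup[of f x b] assms(2) by (simp add: o_def)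
qed

lemma
  fixes f :: "nat \<Rightarrow> 'a \<Rightarrow> real"
  assumes [measurable]: "\<And>n. f n \<in> borel_measurable M"
    and "integrable M h"
    and nonneg: "\<And>n \<omega>. \<omega> \<in> space M \<Longrightarrow> 0 \<le> f n \<omega>"
    and dominated: "\<And>n \<omega>. \<omega> \<in> space M \<Longrightarrow> f n \<omega> \<le> h \<omega>"
  shows integrable_pointwise_limsup: "integrable M (pointwise_limsup f)"
    and lim_integral_le_integral_pointwise_limsup:
      "(\<lambda>n. integral\<^sup>L M (f n)) \<longlonglongrightarrow> L \<Longrightarrow> L \<le> integral\<^sup>L M (pointwise_limsup f)"
proof -
  have [measurable]: "h \<in> borel_measurable M" "pointwise_limsup f \<in> borel_measurable M"
    using \<open>integrable M h\<close> unfolding pointwise_limsup_def by measurable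
  have h_nonneg: "0 \<le> h \<omega>" if "\<omega> \<in> space M" for \<omega>
    using nonneg[OF that, of 0] dominated[OF that, of 0] by simp
  then have limsup_le_h: "pointwise_limsup f \<omega> \<le> h \<omega>" if "\<omega> \<in> space M" for \<omega>
    using that dominated by (intro pointwise_limsup_le) auto
  show integrable: "integrable M (pointwise_limsup f)"
    using limsup_le_h h_nonneg
    by (intro Bochner_Integration.integrable_bound[OF \<open>integrable M h\<close>] AE_I2)
      (auto simp: abs_of_nonneg pointwise_limsup_nonneg)
  assume lim: "(\<lambda>n. integral\<^sup>L M (f n)) \<longlonglongrightarrow> L"
  have integrable_f: "integrable M (f n)" for n
    using nonneg dominated h_nonneg
    by (intro Bochner_Integration.integrable_bound[OF \<open>integrable M h\<close>] AE_I2) auto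
  have "ennreal L = limsup (\<lambda>n. \<integral>\<^sup>+\<omega>. ennreal (f n \<omega>) \<partial>M)"
    using lim integrable_f nonneg
    by (subst nn_integral_eq_integral) (auto intro!: lim_imp_Limsup[symmetric] tendsto_ennrealI)
  also have "\<dots> \<le> (\<integral>\<^sup>+\<omega>. limsup (\<lambda>n. ennreal (f n \<omega>)) \<partial>M)"
  proof (rule nn_integral_limsup[where w="\<lambda>\<omega>. ennreal (h \<omega>)"])
    show "AE \<omega> in M. ennreal (f n \<omega>) \<le> ennreal (h \<omega>)" for n
      using dominated by (intro AE_I2 ennreal_leI) auto
    show "(\<integral>\<^sup>+\<omega>. ennreal (h \<omega>) \<partial>M) < \<infinity>"
      using \<open>integrable M h\<close> h_nonneg
      by (subst nn_integral_eq_integral) (auto intro: AE_I2)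
  qed measurable
  also have "\<dots> = (\<integral>\<^sup>+\<omega>. ennreal (pointwise_limsup f \<omega>) \<partial>M)"
    using dominated by (intro nn_integral_cong ennreal_pointwise_limsup[symmetric]) auto
  also have "\<dots> = ennreal (integral\<^sup>L M (pointwise_limsup f))"
    using integrable pointwise_limsup_nonneg by (intro nn_integral_eq_integral AE_I2) auto
  finally have "ennreal L \<le> ennreal (integral\<^sup>L M (pointwise_limsup f))" .
  moreover have "0 \<le> integral\<^sup>L M (pointwise_limsup f)"
    by (intro integral_nonneg_AE AE_I2) (simp add: pointwise_limsup_nonneg)
  ultimately show "L \<le> integral\<^sup>L M (pointwise_limsup f)"
    by simp
qed

definition utility :: "(real^'k \<Rightarrow> real^'k) \<Rightarrow> (real^'k \<Rightarrow> real) \<Rightarrow> real^'k \<Rightarrow> real" where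
  "utility q s x = q x \<bullet> x - s x"

lemma zero_in_nonneg_orthant: "0 \<in> nonneg_orthant"
  by (simp add: nonneg_orthant_def)

lemma inner_nonneg_orthant:
  assumes "g \<in> nonneg_orthant" "x \<in> nonneg_orthant"
  shows "0 \<le> g \<bullet> x"
  using assms by (auto simp: inner_vec_def nonneg_orthant_def intro!: sum_nonneg)

lemma inner_le_norm_bound:
  assumes "norm g \<le> G"
  shows "g \<bullet> x \<le> G * norm x"
  using norm_cauchy_schwarz[of g x] mult_right_mono[OF assms norm_ge_zero[of x]] by linarith

lemma mech_IR_payment_le:
  assumes "is_mechanism \<Gamma> q s" "mech_IR q s" "\<And>g. g \<in> \<Gamma> \<Longrightarrow> norm g \<le> G"
    and "x \<in> nonneg_orthant"
  shows "s x \<le> G * norm x"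
proof -
  have "s x \<le> q x \<bullet> x"
    using assms(2,4) by (auto simp: mech_IR_def)
  also have "\<dots> \<le> G * norm x"
    using assms(1,3,4) by (intro inner_le_norm_bound) (auto simp: is_mechanism_def)
  finally show ?thesis .
qed

lemma mech_IC_utility_lipschitz:
  assumes "is_mechanism \<Gamma> q s" "mech_IC q s" "\<And>g. g \<in> \<Gamma> \<Longrightarrow> norm g \<le> G"
    and "x \<in> nonneg_orthant" "y \<in> nonneg_orthant"
  shows "\<bar>utility q s x - utility q s y\<bar> \<le> G * dist x y"
proof -
  have one_sided: "utility q s x - utility q s y \<le> G * dist x y"
    if "x \<in> nonneg_orthant" "y \<in> nonneg_orthant" for x y
  proof -
    have "q x \<bullet> y - s x \<le> utility q s y"
      using assms(2) that by (auto simp: mech_IC_def utility_def)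
    moreover have "q x \<bullet> (x - y) \<le> G * norm (x - y)"
      using assms(1,3) that by (intro inner_le_norm_bound) (auto simp: is_mechanism_def)
    ultimately show ?thesis
      by (simp add: utility_def dist_norm inner_diff_right)
  qed
  show ?thesis
    using one_sided[of x y] one_sided[of y x] assms(4,5) by (simp add: abs_le_iff dist_commute)
qed

lemma admissible_mon_normalize:
  assumes "prob_space M" "\<Gamma> \<subseteq> nonneg_orthant" "admissible_mon \<Gamma> M X q s"
  shows "admissible_mon \<Gamma> M X q (\<lambda>x. s x - s 0)"
    and "revenue M X s \<le> revenue M X (\<lambda>x. s x - s 0)"
proof -
  interpret prob_space M
    by fact
  have IC: "mech_IC q s" and IR: "mech_IR q s" and "q 0 \<in> \<Gamma>"
    and integrable: "integrable M (\<lambda>\<omega>. s (X \<omega>))"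
    using assms(3) zero_in_nonneg_orthant
    by (auto simp: admissible_mon_def is_mechanism_def)
  have "0 \<le> q x \<bullet> x - (s x - s 0)" if "x \<in> nonneg_orthant" for x
  proof -
    have "q 0 \<bullet> x - s 0 \<le> q x \<bullet> x - s x"
      using IC that zero_in_nonneg_orthant by (auto simp: mech_IC_def)
    moreover have "0 \<le> q 0 \<bullet> x"
      using \<open>q 0 \<in> \<Gamma>\<close> assms(2) that by (intro inner_nonneg_orthant) auto
    ultimately show ?thesis
      by simp
  qed
  then show "admissible_mon \<Gamma> M X q (\<lambda>x. s x - s 0)"
    using assms(3) integrable by (auto simp: admissible_mon_def is_mechanism_def mech_IC_def mech_IR_def
        mech_monotonic_def)
  have "s 0 \<le> 0"
    using IR zero_in_nonneg_orthant by (auto simp: mech_IR_def)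
  moreover have "revenue M X (\<lambda>x. s x - s 0) = revenue M X s - s 0"
    using integrable by (simp add: revenue_def prob_space)
  ultimately show "revenue M X s \<le> revenue M X (\<lambda>x. s x - s 0)"
    by simp
qed

lemma bdd_above_revenues:
  assumes "\<And>g. g \<in> \<Gamma> \<Longrightarrow> norm g \<le> G" "\<forall>\<omega>\<in>space M. X \<omega> \<in> nonneg_orthant"
    and "integrable M (\<lambda>\<omega>. norm (X \<omega>))"
  shows "bdd_above {revenue M X s |q s. admissible_mon \<Gamma> M X q s}"
proof (rule bdd_aboveI)
  fix r
  assume "r \<in> {revenue M X s |q s. admissible_mon \<Gamma> M X q s}"
  then obtain q s where "admissible_mon \<Gamma> M X q s" "r = revenue M X s"
    by blast
  moreover from this(1) have "revenue M X s \<le> integral\<^sup>L M (\<lambda>\<omega>. G * norm (X \<omega>))"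
    unfolding revenue_def using assms mech_IR_payment_le[of \<Gamma> q s G]
    by (intro integral_mono) (auto simp: admissible_mon_def)
  ultimately show "r \<le> integral\<^sup>L M (\<lambda>\<omega>. G * norm (X \<omega>))"
    by simp
qed

lemma revenue_le_MonRev:
  assumes "\<And>g. g \<in> \<Gamma> \<Longrightarrow> norm g \<le> G" "\<forall>\<omega>\<in>space M. X \<omega> \<in> nonneg_orthant"
    and "integrable M (\<lambda>\<omega>. norm (X \<omega>))" "admissible_mon \<Gamma> M X q s"
  shows "revenue M X s \<le> MonRev \<Gamma> M X"
  unfolding MonRev_def using assms(4) by (intro cSup_upper bdd_above_revenues[OF assms(1-3)]) auto

lemma MonRev_maximizing_sequence:
  assumes "prob_space M" "\<Gamma> \<noteq> {}" "\<Gamma> \<subseteq> nonneg_orthant" "\<And>g. g \<in> \<Gamma> \<Longrightarrow> norm g \<le> G"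
    and "\<forall>\<omega>\<in>space M. X \<omega> \<in> nonneg_orthant" "integrable M (\<lambda>\<omega>. norm (X \<omega>))"
  obtains q s where "\<And>n. admissible_mon \<Gamma> M X (q n) (s n)" "\<And>n. s n 0 = 0"
    "(\<lambda>n. revenue M X (s n)) \<longlonglongrightarrow> MonRev \<Gamma> M X"
proof -
  let ?R = "{revenue M X s |q s. admissible_mon \<Gamma> M X q s}"
  obtain g where "g \<in> \<Gamma>"
    using assms(2) by blast
  then have "admissible_mon \<Gamma> M X (\<lambda>_. g) (\<lambda>_. 0)"
    using assms(3) inner_nonneg_orthant
    by (auto simp: admissible_mon_def is_mechanism_def mech_IC_def mech_IR_def mech_monotonic_def)
  then have "?R \<noteq> {}"
    by blast
  have "\<exists>q s. admissible_mon \<Gamma> M X q s \<and> s 0 = 0 \<and> MonRev \<Gamma> M X - 1 / Suc n < revenue M X s"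
    for n :: nat
  proof -
    obtain q s where "admissible_mon \<Gamma> M X q s" "MonRev \<Gamma> M X - 1 / Suc n < revenue M X s"
      using less_cSup_iff[OF \<open>?R \<noteq> {}\<close> bdd_above_revenues[OF assms(4-6)], of "MonRev \<Gamma> M X - 1 / Suc n"]
      by (auto simp: MonRev_def)
    then show ?thesis
      using admissible_mon_normalize[OF assms(1,3)] by fastforce
  qed
  then obtain q s where adm: "\<And>n. admissible_mon \<Gamma> M X (q n) (s n)" and "\<And>n. s n 0 = 0"
    and close: "\<And>n. MonRev \<Gamma> M X - 1 / Suc n < revenue M X (s n)"
    by metis
  have "(\<lambda>n. revenue M X (s n)) \<longlonglongrightarrow> MonRev \<Gamma> M X"
  proof (rule tendsto_sandwich)
    show "\<forall>\<^sub>F n in sequentially. MonRev \<Gamma> M X - 1 / Suc n \<le> revenue M X (s n)"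
      using close by (simp add: less_imp_le)
    show "\<forall>\<^sub>F n in sequentially. revenue M X (s n) \<le> MonRev \<Gamma> M X"
      using revenue_le_MonRev[OF assms(4-6) adm] by simp
    show "(\<lambda>n. MonRev \<Gamma> M X - 1 / Suc n) \<longlonglongrightarrow> MonRev \<Gamma> M X"
      using tendsto_diff[OF tendsto_const LIMSEQ_Suc[OF lim_inverse_n']] by (simp add: inverse_eq_divide)
  qed simp
  with adm \<open>\<And>n. s n 0 = 0\<close> show thesis
    by (rule that)
qed

locale mechanism_sequence =
  fixes \<Gamma> :: "(real^'k) set" and G :: real
    and q :: "nat \<Rightarrow> real^'k \<Rightarrow> real^'k" and s :: "nat \<Rightarrow> real^'k \<Rightarrow> real"
  assumes compact_allocations: "compact \<Gamma>"
    and allocation_norm_le: "\<And>g. g \<in> \<Gamma> \<Longrightarrow> norm g \<le> G"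
    and mechanism: "\<And>n. is_mechanism \<Gamma> (q n) (s n)"
    and IC: "\<And>n. mech_IC (q n) (s n)"
    and IR: "\<And>n. mech_IR (q n) (s n)"
    and monotonic: "\<And>n. mech_monotonic (s n)"
    and payment_zero: "\<And>n. s n 0 = 0"
begin

lemma subsequence: "mechanism_sequence \<Gamma> G (\<lambda>k. q (r k)) (\<lambda>k. s (r k))"
  using compact_allocations allocation_norm_le mechanism IC IR monotonic payment_zero
  by unfold_locales

lemma allocation_mem:
  assumes "x \<in> nonneg_orthant"
  shows "q n x \<in> \<Gamma>"
  using mechanism assms by (auto simp: is_mechanism_def)

lemma payment_nonneg:
  assumes "x \<in> nonneg_orthant"
  shows "0 \<le> s n x"
proof -
  have "s n 0 \<le> s n x"
    using monotonic[of n] assms zero_in_nonneg_orthant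
    unfolding mech_monotonic_def by (auto simp: nonneg_orthant_def)
  then show ?thesis
    using payment_zero by simp
qed

lemma payment_le:
  assumes "x \<in> nonneg_orthant"
  shows "s n x \<le> G * norm x"
  using mech_IR_payment_le[OF mechanism IR allocation_norm_le assms] .

lemma utility_nonneg:
  assumes "x \<in> nonneg_orthant"
  shows "0 \<le> utility (q n) (s n) x"
  using IR[of n] assms by (auto simp: mech_IR_def utility_def)

lemma utility_le:
  assumes "x \<in> nonneg_orthant"
  shows "utility (q n) (s n) x \<le> G * norm x"
  using inner_le_norm_bound[OF allocation_norm_le[OF allocation_mem[OF assms, of n]], of x]
    payment_nonneg[OF assms, of n] unfolding utility_def by linarith

lemma convergent_utility_subseq:
  obtains d where "strict_mono d"
    "\<And>x. x \<in> nonneg_orthant \<Longrightarrow> convergent (\<lambda>k. utility (q (d k)) (s (d k)) x)"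
proof -
  have lipschitz: "\<bar>utility (q n) (s n) x - utility (q n) (s n) y\<bar> \<le> G * dist x y"
    if "x \<in> nonneg_orthant" "y \<in> nonneg_orthant" for n x y
    using mech_IC_utility_lipschitz[OF mechanism IC allocation_norm_le that] .
  have bounded: "\<bar>utility (q n) (s n) x\<bar> \<le> G * norm x" if "x \<in> nonneg_orthant" for n x
    using utility_nonneg[OF that] utility_le[OF that] by simp
  show thesis
    using equilipschitz_pointwise_convergent_subseq[where S=nonneg_orthant
        and u="\<lambda>n. utility (q n) (s n)" and L=G and B="\<lambda>x. G * norm x"] lipschitz bounded that
    by blast
qed

lemma monotonic_pointwise_limsup: "mech_monotonic (pointwise_limsup s)"
  unfolding mech_monotonic_def
proof (intro ballI impI)
  fix x y :: "real^'k"
  assume "x \<in> nonneg_orthant" "y \<in> nonneg_orthant" "\<forall>i. x $ i \<le> y $ i"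
  then show "pointwise_limsup s x \<le> pointwise_limsup s y"
    using monotonic payment_le by (intro pointwise_limsup_mono) (auto simp: mech_monotonic_def)
qed

text \<open>The allocation of the limit mechanism at \<open>x\<close>: a limit point of \<open>q n x\<close> along a
  subsequence on which \<open>s n x\<close> realises its limit superior.\<close>
lemma limit_allocation:
  assumes utility_lim: "\<And>y. y \<in> nonneg_orthant \<Longrightarrow> (\<lambda>n. utility (q n) (s n) y) \<longlonglongrightarrow> U y"
    and "x \<in> nonneg_orthant"
  obtains g where "g \<in> \<Gamma>" "g \<bullet> x - pointwise_limsup s x = U x"
    "\<And>y. y \<in> nonneg_orthant \<Longrightarrow> g \<bullet> y - pointwise_limsup s x \<le> U y"
proof -
  obtain r where "strict_mono r" and payment_lim: "(\<lambda>k. s (r k) x) \<longlonglongrightarrow> pointwise_limsup s x"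
    using pointwise_limsup_subseq_tendsto payment_nonneg payment_le \<open>x \<in> nonneg_orthant\<close> by metis
  obtain g r' where "g \<in> \<Gamma>" "strict_mono r'" and "((\<lambda>k. q (r k) x) \<circ> r') \<longlonglongrightarrow> g"
    using compact_imp_seq_compact[OF compact_allocations] allocation_mem[OF \<open>x \<in> nonneg_orthant\<close>]
    by (metis seq_compactE)
  define t where "t = r \<circ> r'"
  have "strict_mono t"
    using \<open>strict_mono r\<close> \<open>strict_mono r'\<close> by (simp add: t_def strict_mono_o)
  have allocation_lim: "(\<lambda>k. q (t k) x) \<longlonglongrightarrow> g"
    using \<open>((\<lambda>k. q (r k) x) \<circ> r') \<longlonglongrightarrow> g\<close> by (simp add: t_def o_def)
  have "(\<lambda>k. s (t k) x) \<longlonglongrightarrow> pointwise_limsup s x"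
    using LIMSEQ_subseq_LIMSEQ[OF payment_lim \<open>strict_mono r'\<close>] by (simp add: t_def o_def)
  then have deviation_lim: "(\<lambda>k. q (t k) x \<bullet> y - s (t k) x) \<longlonglongrightarrow> g \<bullet> y - pointwise_limsup s x" for y
    by (intro tendsto_intros allocation_lim)
  have utility_sub_lim: "(\<lambda>k. utility (q (t k)) (s (t k)) y) \<longlonglongrightarrow> U y" if "y \<in> nonneg_orthant" for y
    using LIMSEQ_subseq_LIMSEQ[OF utility_lim[OF that] \<open>strict_mono t\<close>] by (simp add: o_def)
  show thesis
  proof
    show "g \<in> \<Gamma>"
      by fact
    show "g \<bullet> x - pointwise_limsup s x = U x"
      using deviation_lim[of x] utility_sub_lim[OF \<open>x \<in> nonneg_orthant\<close>]
      by (simp add: utility_def LIMSEQ_unique)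
    show "g \<bullet> y - pointwise_limsup s x \<le> U y" if "y \<in> nonneg_orthant" for y
      using deviation_lim[of y] utility_sub_lim[OF that] IC \<open>x \<in> nonneg_orthant\<close> that
      by (intro LIMSEQ_le) (auto simp: mech_IC_def utility_def)
  qed
qed

lemma limit_mechanism:
  assumes "\<And>x. x \<in> nonneg_orthant \<Longrightarrow> convergent (\<lambda>n. utility (q n) (s n) x)"
  obtains q' where "is_mechanism \<Gamma> q' (pointwise_limsup s)" "mech_IC q' (pointwise_limsup s)"
    "mech_IR q' (pointwise_limsup s)" "mech_monotonic (pointwise_limsup s)"
proof -
  define U where "U x = lim (\<lambda>n. utility (q n) (s n) x)" for x
  have utility_lim: "(\<lambda>n. utility (q n) (s n) x) \<longlonglongrightarrow> U x" if "x \<in> nonneg_orthant" for x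
    using assms[OF that] by (simp add: U_def convergent_LIMSEQ_iff)
  have "0 \<le> U x" if "x \<in> nonneg_orthant" for x
    using utility_lim[OF that] utility_nonneg[OF that] by (intro LIMSEQ_le_const) auto
  have "\<forall>x\<in>nonneg_orthant. \<exists>g. g \<in> \<Gamma> \<and> g \<bullet> x - pointwise_limsup s x = U x
      \<and> (\<forall>y\<in>nonneg_orthant. g \<bullet> y - pointwise_limsup s x \<le> U y)"
    using limit_allocation[OF utility_lim] by (metis (no_types, lifting))
  then obtain q' where q': "\<And>x. x \<in> nonneg_orthant \<Longrightarrow> q' x \<in> \<Gamma>"
    "\<And>x. x \<in> nonneg_orthant \<Longrightarrow> q' x \<bullet> x - pointwise_limsup s x = U x"
    "\<And>x y. x \<in> nonneg_orthant \<Longrightarrow> y \<in> nonneg_orthant \<Longrightarrow> q' x \<bullet> y - pointwise_limsup s x \<le> U y"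
    by (metis bchoice)
  show thesis
  proof
    show "is_mechanism \<Gamma> q' (pointwise_limsup s)"
      using q'(1) by (simp add: is_mechanism_def)
    show "mech_IC q' (pointwise_limsup s)"
      using q'(2,3) by (simp add: mech_IC_def)
    show "mech_IR q' (pointwise_limsup s)"
      using q'(2) \<open>\<And>x. x \<in> nonneg_orthant \<Longrightarrow> 0 \<le> U x\<close> by (simp add: mech_IR_def)
    show "mech_monotonic (pointwise_limsup s)"
      by (rule monotonic_pointwise_limsup)
  qed
qed

lemma revenue_pointwise_limsup:
  assumes "integrable M (\<lambda>\<omega>. norm (X \<omega>))" "\<forall>\<omega>\<in>space M. X \<omega> \<in> nonneg_orthant"
    and "\<And>n. integrable M (\<lambda>\<omega>. s n (X \<omega>))" "(\<lambda>n. revenue M X (s n)) \<longlonglongrightarrow> r"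
  shows "integrable M (\<lambda>\<omega>. pointwise_limsup s (X \<omega>))" "r \<le> revenue M X (pointwise_limsup s)"
proof -
  let ?f = "\<lambda>n \<omega>. s n (X \<omega>)"
  have "pointwise_limsup ?f = (\<lambda>\<omega>. pointwise_limsup s (X \<omega>))"
    by (simp add: pointwise_limsup_def fun_eq_iff)
  moreover have "integrable M (\<lambda>\<omega>. G * norm (X \<omega>))"
    using assms(1) by simp
  moreover note integrable_pointwise_limsup[of ?f M "\<lambda>\<omega>. G * norm (X \<omega>)"]
    lim_integral_le_integral_pointwise_limsup[of ?f M "\<lambda>\<omega>. G * norm (X \<omega>)"]
  ultimately show "integrable M (\<lambda>\<omega>. pointwise_limsup s (X \<omega>))" "r \<le> revenue M X (pointwise_limsup s)"
    using assms payment_nonneg payment_le by (auto simp: revenue_def)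
qed

end

theorem theorem2:
  fixes \<Gamma> :: "(real^'k) set" and M :: "'a measure" and X :: "'a \<Rightarrow> real^'k"
  assumes "prob_space M"
    and "\<Gamma> \<noteq> {}" and "compact \<Gamma>" and "\<Gamma> \<subseteq> nonneg_orthant"
    and "X \<in> borel_measurable M"
    and "\<forall>\<omega>\<in>space M. X \<omega> \<in> nonneg_orthant"
    and "integrable M (\<lambda>\<omega>. norm (X \<omega>))"
  shows "\<exists>q s. admissible_mon \<Gamma> M X q s \<and> revenue M X s = MonRev \<Gamma> M X"
proof -
  obtain G where G: "\<And>g. g \<in> \<Gamma> \<Longrightarrow> norm g \<le> G"
    using compact_imp_bounded[OF \<open>compact \<Gamma>\<close>] by (auto simp: bounded_iff)
  obtain q s where admissible: "\<And>n. admissible_mon \<Gamma> M X (q n) (s n)" and "\<And>n. s n 0 = 0"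
    and maximizing: "(\<lambda>n. revenue M X (s n)) \<longlonglongrightarrow> MonRev \<Gamma> M X"
    using MonRev_maximizing_sequence[OF assms(1,2,4) G assms(6,7)] by blast
  interpret mechanism_sequence \<Gamma> G q s
    using \<open>compact \<Gamma>\<close> G admissible \<open>\<And>n. s n 0 = 0\<close>
    by unfold_locales (auto simp: admissible_mon_def)
  obtain d where "strict_mono d"
    and convergent_utility: "\<And>x. x \<in> nonneg_orthant \<Longrightarrow> convergent (\<lambda>k. utility (q (d k)) (s (d k)) x)"
    using convergent_utility_subseq by blast
  interpret sub: mechanism_sequence \<Gamma> G "\<lambda>k. q (d k)" "\<lambda>k. s (d k)"
    by (rule subsequence)
  define s' where "s' = pointwise_limsup (\<lambda>k. s (d k))"
  obtain q' where "is_mechanism \<Gamma> q' s'" "mech_IC q' s'" "mech_IR q' s'" "mech_monotonic s'"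
    using sub.limit_mechanism convergent_utility unfolding s'_def by blast
  moreover have "(\<lambda>k. revenue M X (s (d k))) \<longlonglongrightarrow> MonRev \<Gamma> M X"
    using LIMSEQ_subseq_LIMSEQ[OF maximizing \<open>strict_mono d\<close>] by (simp add: o_def)
  then have "integrable M (\<lambda>\<omega>. s' (X \<omega>))" and "MonRev \<Gamma> M X \<le> revenue M X s'"
    using sub.revenue_pointwise_limsup[OF assms(7,6)] admissible
    unfolding s'_def admissible_mon_def by blast+
  ultimately have "admissible_mon \<Gamma> M X q' s'" and "MonRev \<Gamma> M X \<le> revenue M X s'"
    by (simp_all add: admissible_mon_def)
  then show ?thesis
    using revenue_le_MonRev[OF G assms(6,7)] by (blast intro: order.antisym)
qed

end
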